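(* Let $H$ be a bipartite graph with $m$ edges and width $w$. Then for every graph $G$, $$t_H(G) \geq t_{K_2}(G)^{m+w}.$$
   Context: All graphs are finite and simple. A homomorphism from $H$ to $G$ is a map $f:V(H)\to V(G)$ sending edges to edges; $h_H(G)$ is the number of homomorphisms and $t_H(G)=h_H(G)/|V(G)|^{|V(H)|}$. $K_2$ is a single edge. Width: for a connected bipartite graph $H$ with parts $V_1,V_2$, let $\bar H$ be the bipartite graph with parts $V_1,V_2$ in which $(v_1,v_2)\in V_1\times V_2$ is an edge if and only if it is not an edge of $H$; the width of $H$ is the minimum degree of $\bar H$. If $H$ is not connected, its width is the sum of the widths of its connected components. *)

theory Defs
  imports Complex_Main "HOL-Library.FuncSet"
begin

definition graph :: "'a set \<Rightarrow> 'a set set \<Rightarrow> bool" where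
  "graph V E \<longleftrightarrow> finite V \<and> (\<forall>e\<in>E. \<exists>u\<in>V. \<exists>v\<in>V. u \<noteq> v \<and> e = {u, v})"

definition hom_count :: "'a set \<Rightarrow> 'a set set \<Rightarrow> 'b set \<Rightarrow> 'b set set \<Rightarrow> nat" where
  "hom_count VH EH VG EG =
     card {f \<in> VH \<rightarrow>\<^sub>E VG. \<forall>u v. {u, v} \<in> EH \<longrightarrow> {f u, f v} \<in> EG}"

definition hom_density :: "'a set \<Rightarrow> 'a set set \<Rightarrow> 'b set \<Rightarrow> 'b set set \<Rightarrow> real" where
  "hom_density VH EH VG EG = real (hom_count VH EH VG EG) / real (card VG) ^ card VH"

definition K2_V :: "nat set" where "K2_V = {0, 1}"
definition K2_E :: "nat set set" where "K2_E = {{0, 1}}"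

definition bipartition :: "'a set \<Rightarrow> 'a set set \<Rightarrow> 'a set \<Rightarrow> 'a set \<Rightarrow> bool" where
  "bipartition V E V1 V2 \<longleftrightarrow> V1 \<inter> V2 = {} \<and> V1 \<union> V2 = V \<and>
     (\<forall>e\<in>E. \<exists>a\<in>V1. \<exists>b\<in>V2. e = {a, b})"

definition bipartite :: "'a set \<Rightarrow> 'a set set \<Rightarrow> bool" where
  "bipartite V E \<longleftrightarrow> (\<exists>V1 V2. bipartition V E V1 V2)"

text \<open>Width of a connected bipartite graph: minimum degree of the bipartite complement
  with respect to its bipartition (unique up to swapping the parts, which does not matter).\<close>
definition conn_width :: "'a set \<Rightarrow> 'a set set \<Rightarrow> nat" where
  "conn_width V E =
     (let p = (SOME p. bipartition V E (fst p) (snd p)); V1 = fst p; V2 = snd p in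
      Min ((\<lambda>v. card {u \<in> V2. {v, u} \<notin> E}) ` V1 \<union> (\<lambda>v. card {u \<in> V1. {v, u} \<notin> E}) ` V2))"

definition adj :: "'a set set \<Rightarrow> 'a \<Rightarrow> 'a \<Rightarrow> bool" where
  "adj E u v \<longleftrightarrow> {u, v} \<in> E"

definition components :: "'a set \<Rightarrow> 'a set set \<Rightarrow> 'a set set" where
  "components V E = {{u \<in> V. (adj E)\<^sup>*\<^sup>* v u} | v. v \<in> V}"

definition width :: "'a set \<Rightarrow> 'a set set \<Rightarrow> nat" where
  "width V E = (\<Sum>C\<in>components V E. conn_width C {e \<in> E. e \<subseteq> C})"

end

(*
  Homomorphism counts are multiplicative over connected components and the width is additive,
  so it suffices to treat one component C with parts X and Y.  Choose a vertex r, say in X,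
  with the least number w of non-neighbours in Y.  Joining r to all of Y gives a supergraph H'
  with e(C) + w edges, so h_C(G) >= h_H'(G), and H' has a vertex complete to the other side,
  for which Sidorenko's inequality h_H'(G) >= n^|V(H')| p^e(H') holds (Conlon, Fox and
  Sudakov).  It is proved by the entropy method: send r to a vertex x drawn from the
  stationary distribution deg/vol and the vertices of Y to independent uniform neighbours of x;
  every other vertex u then has codeg(N(u)) possible images, and weighted AM-GM together with
  Gibbs' inequality bounds the expected logarithms of deg x and of these codegrees.
*)

theory Submission
  imports Defs
begin

section \<open>Gibbs' inequality\<close>

lemma gibbs_inequality:
  fixes p q :: "'i \<Rightarrow> real"
  assumes "\<And>i. i \<in> I \<Longrightarrow> 0 \<le> p i" and "\<And>i. i \<in> I \<Longrightarrow> 0 \<le> q i"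
    and "\<And>i. i \<in> I \<Longrightarrow> 0 < p i \<Longrightarrow> 0 < q i" and "sum q I \<le> sum p I"
  shows "(\<Sum>i\<in>I. p i * ln (q i)) \<le> (\<Sum>i\<in>I. p i * ln (p i))"
proof -
  have pointwise: "p i * ln (q i) \<le> p i * ln (p i) + (q i - p i)" if "i \<in> I" for i
  proof (cases "p i = 0")
    case True
    then show ?thesis using assms(2)[OF that] by simp
  next
    case False
    then have p: "0 < p i" using assms(1)[OF that] by simp
    then have q: "0 < q i" using assms(3)[OF that] by simp
    have "p i * ln (q i / p i) \<le> p i * (q i / p i - 1)"
      using p q by (intro mult_left_mono ln_le_minus_one) auto
    then show ?thesis using p q by (simp add: ln_div algebra_simps)
  qed
  have "(\<Sum>i\<in>I. p i * ln (q i)) \<le> (\<Sum>i\<in>I. p i * ln (p i) + (q i - p i))"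
    by (intro sum_mono pointwise)
  also have "\<dots> = (\<Sum>i\<in>I. p i * ln (p i)) + (sum q I - sum p I)"
    by (simp add: sum.distrib sum_subtractf)
  finally show ?thesis using assms(4) by linarith
qed

text \<open>From Gibbs' inequality, comparing \<open>q\<close> with the distribution proportional to \<open>q i * a i\<close>.\<close>
lemma weighted_am_gm:
  fixes q a :: "'i \<Rightarrow> real"
  assumes "finite I" and q_nonneg: "\<And>i. i \<in> I \<Longrightarrow> 0 \<le> q i" and "sum q I = 1"
    and a_pos: "\<And>i. i \<in> I \<Longrightarrow> 0 < q i \<Longrightarrow> 0 < a i"
  shows "exp (\<Sum>i\<in>I. q i * ln (a i)) \<le> (\<Sum>i\<in>I. q i * a i)"
proof -
  define s where "s = (\<Sum>i\<in>I. q i * a i)"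
  have qa_nonneg: "0 \<le> q i * a i" if "i \<in> I" for i
    using q_nonneg[OF that] a_pos[OF that] by (cases "q i = 0") auto
  have "\<exists>j\<in>I. 0 < q j"
  proof (rule ccontr)
    assume "\<not> (\<exists>j\<in>I. 0 < q j)"
    then have "sum q I \<le> 0" by (intro sum_nonpos) (simp add: not_less)
    then show False using \<open>sum q I = 1\<close> by simp
  qed
  then obtain j where j: "j \<in> I" "0 < q j" by blast
  have "0 < q j * a j" using j a_pos by simp
  also have "\<dots> \<le> s" unfolding s_def using \<open>finite I\<close> j(1) qa_nonneg by (intro member_le_sum) auto
  finally have s: "0 < s" .
  have "(\<Sum>i\<in>I. q i * ln (q i * a i / s)) \<le> (\<Sum>i\<in>I. q i * ln (q i))"
  proof (rule gibbs_inequality)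
    show "(\<Sum>i\<in>I. q i * a i / s) \<le> sum q I"
      using s \<open>sum q I = 1\<close> by (simp add: s_def flip: sum_divide_distrib)
    show "0 \<le> q i * a i / s" if "i \<in> I" for i
      using qa_nonneg[OF that] s by simp
    show "0 < q i * a i / s" if "i \<in> I" "0 < q i" for i
      using that a_pos s by simp
  qed (use q_nonneg in simp)
  moreover have "(\<Sum>i\<in>I. q i * ln (q i * a i / s)) =
      (\<Sum>i\<in>I. q i * ln (q i) + q i * ln (a i) - q i * ln s)"
  proof (rule sum.cong)
    fix i assume i: "i \<in> I"
    show "q i * ln (q i * a i / s) = q i * ln (q i) + q i * ln (a i) - q i * ln s"
    proof (cases "q i = 0")
      case False
      then have "0 < q i" using q_nonneg[OF i] by simp
      then show ?thesis using a_pos[OF i] s by (simp add: ln_mult ln_div algebra_simps)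
    qed simp
  qed simp
  ultimately have "(\<Sum>i\<in>I. q i * ln (q i) + q i * ln (a i) - q i * ln s) \<le> (\<Sum>i\<in>I. q i * ln (q i))"
    by simp
  then have "(\<Sum>i\<in>I. q i * ln (a i)) \<le> ln s"
    using \<open>sum q I = 1\<close> by (simp add: sum.distrib sum_subtractf flip: sum_distrib_right)
  then show ?thesis using s by (simp add: s_def ln_ge_iff)
qed

section \<open>Sums over finite function spaces\<close>

lemma sum_PiE_Un:
  assumes "I \<inter> J = {}"
  shows "(\<Sum>f\<in>PiE (I \<union> J) X. F f) =
         (\<Sum>g\<in>PiE I X. \<Sum>h\<in>PiE J X. F (\<lambda>i. if i \<in> I then g i else h i))"
proof -
  have "(\<Sum>f\<in>PiE (I \<union> J) X. F f) =
        (\<Sum>(g, h)\<in>PiE I X \<times> PiE J X. F (\<lambda>i. if i \<in> I then g i else h i))"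
  proof (rule sum.reindex_bij_witness[of _ "\<lambda>(g, h) i. if i \<in> I then g i else h i"
          "\<lambda>f. (restrict f I, restrict f J)"])
    fix f assume f: "f \<in> PiE (I \<union> J) X"
    have merge: "(\<lambda>i. if i \<in> I then restrict f I i else restrict f J i) = f"
      using f by (auto simp: PiE_def extensional_def fun_eq_iff)
    show "(case (restrict f I, restrict f J) of (g, h) \<Rightarrow> \<lambda>i. if i \<in> I then g i else h i) = f"
      using merge by simp
    show "(case (restrict f I, restrict f J) of (g, h) \<Rightarrow> F (\<lambda>i. if i \<in> I then g i else h i)) = F f"
      using merge by simp
    show "(restrict f I, restrict f J) \<in> PiE I X \<times> PiE J X"
      using f by auto
  next
    fix p assume p: "p \<in> PiE I X \<times> PiE J X"
    then show "(restrict (case p of (g, h) \<Rightarrow> \<lambda>i. if i \<in> I then g i else h i) I,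
                restrict (case p of (g, h) \<Rightarrow> \<lambda>i. if i \<in> I then g i else h i) J) = p"
      using assms by (auto simp: PiE_def extensional_def fun_eq_iff)
    show "(case p of (g, h) \<Rightarrow> \<lambda>i. if i \<in> I then g i else h i) \<in> PiE (I \<union> J) X"
      using p by (auto simp: PiE_def extensional_def)
  qed
  then show ?thesis by (simp add: sum.cartesian_product)
qed

lemma sum_PiE_prod_restrict:
  fixes F :: "'b \<Rightarrow> 'c::comm_semiring_1"
  assumes "finite I" and "J \<subseteq> I" and "finite X"
  shows "(\<Sum>g\<in>I \<rightarrow>\<^sub>E X. (\<Prod>i\<in>I. F (g i)) * h (restrict g J)) =
         (\<Sum>x\<in>X. F x) ^ card (I - J) * (\<Sum>g\<in>J \<rightarrow>\<^sub>E X. (\<Prod>i\<in>J. F (g i)) * h g)"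
proof -
  have fin: "finite J" "finite (I - J)" using assms finite_subset by auto
  have I: "I = J \<union> (I - J)" using assms by auto
  have "(\<Sum>g\<in>I \<rightarrow>\<^sub>E X. (\<Prod>i\<in>I. F (g i)) * h (restrict g J)) =
        (\<Sum>g\<in>(J \<union> (I - J)) \<rightarrow>\<^sub>E X. (\<Prod>i\<in>J \<union> (I - J). F (g i)) * h (restrict g J))"
    using I by simp
  also have "\<dots> = (\<Sum>g\<in>J \<rightarrow>\<^sub>E X. \<Sum>g'\<in>(I - J) \<rightarrow>\<^sub>E X.
           ((\<Prod>i\<in>J. F (g i)) * h g) * (\<Prod>i\<in>I - J. F (g' i)))"
  proof (subst sum_PiE_Un, blast, intro sum.cong refl)
    fix g g' assume g: "g \<in> J \<rightarrow>\<^sub>E X"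
    let ?f = "\<lambda>i. if i \<in> J then g i else g' i"
    have "restrict ?f J = g" using g by (auto simp: PiE_def extensional_def fun_eq_iff)
    moreover have "(\<Prod>i\<in>J \<union> (I - J). F (?f i)) = (\<Prod>i\<in>J. F (?f i)) * (\<Prod>i\<in>I - J. F (?f i))"
      using fin by (intro prod.union_disjoint) auto
    moreover have "(\<Prod>i\<in>J. F (?f i)) = (\<Prod>i\<in>J. F (g i))" "(\<Prod>i\<in>I - J. F (?f i)) = (\<Prod>i\<in>I - J. F (g' i))"
      by (auto intro: prod.cong)
    ultimately show "(\<Prod>i\<in>J \<union> (I - J). F (?f i)) * h (restrict ?f J) =
        ((\<Prod>i\<in>J. F (g i)) * h g) * (\<Prod>i\<in>I - J. F (g' i))"
      by (simp add: mult_ac)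
  qed
  also have "\<dots> = (\<Sum>g\<in>J \<rightarrow>\<^sub>E X. ((\<Prod>i\<in>J. F (g i)) * h g) *
                      (\<Sum>g'\<in>(I - J) \<rightarrow>\<^sub>E X. \<Prod>i\<in>I - J. F (g' i)))"
    by (simp add: sum_distrib_left)
  also have "(\<Sum>g'\<in>(I - J) \<rightarrow>\<^sub>E X. \<Prod>i\<in>I - J. F (g' i)) = (\<Sum>x\<in>X. F x) ^ card (I - J)"
    using prod_sum_PiE[of "I - J" "\<lambda>_. X" "\<lambda>_. F", symmetric] fin assms(3) by simp
  finally show ?thesis by (simp only: sum_distrib_left mult_ac)
qed

lemma sum_PiE_singleton:
  fixes h :: "'b \<Rightarrow> 'c::comm_semiring_1"
  assumes "finite X"
  shows "(\<Sum>g\<in>{i} \<rightarrow>\<^sub>E X. h (g i)) = (\<Sum>x\<in>X. h x)"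
  using prod_sum_PiE[of "{i}" "\<lambda>_. X" "\<lambda>_. h"] assms by simp

lemma prod_of_bool: "finite A \<Longrightarrow> (\<Prod>x\<in>A. of_bool (P x)) = (of_bool (\<forall>x\<in>A. P x) :: 'a::comm_semiring_1)"
  by (induction A rule: finite_induct) auto

section \<open>Homomorphism counts, components and bipartitions\<close>

definition is_hom :: "'a set set \<Rightarrow> 'b set set \<Rightarrow> ('a \<Rightarrow> 'b) \<Rightarrow> bool" where
  "is_hom E EG f \<longleftrightarrow> (\<forall>u v. {u, v} \<in> E \<longrightarrow> {f u, f v} \<in> EG)"

lemma hom_count_is_hom: "hom_count V E VG EG = card {f \<in> V \<rightarrow>\<^sub>E VG. is_hom E EG f}"
  by (simp add: hom_count_def is_hom_def)

lemma hom_count_eq_sum: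
  assumes "finite V" and "finite VG"
  shows "hom_count V E VG EG = (\<Sum>f\<in>V \<rightarrow>\<^sub>E VG. of_bool (is_hom E EG f))"
proof -
  have "{f \<in> V \<rightarrow>\<^sub>E VG. is_hom E EG f} = (V \<rightarrow>\<^sub>E VG) \<inter> {f. is_hom E EG f}" by blast
  then show ?thesis using assms by (simp add: hom_count_is_hom finite_PiE)
qed

lemma hom_count_no_edges: "finite V \<Longrightarrow> hom_count V {} VG EG = card VG ^ card V"
  by (simp add: hom_count_def card_PiE)

lemma hom_count_Un:
  assumes "V1 \<inter> V2 = {}" and "finite V1" and "finite V2" and "finite VG"
    and edges: "\<And>e. e \<in> E \<Longrightarrow> e \<subseteq> V1 \<or> e \<subseteq> V2"
  shows "hom_count (V1 \<union> V2) E VG EG =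
    hom_count V1 {e \<in> E. e \<subseteq> V1} VG EG * hom_count V2 {e \<in> E. e \<subseteq> V2} VG EG"
proof -
  have split: "is_hom E EG (\<lambda>i. if i \<in> V1 then g i else h i) \<longleftrightarrow>
      is_hom {e \<in> E. e \<subseteq> V1} EG g \<and> is_hom {e \<in> E. e \<subseteq> V2} EG h" for g h
  proof
    assume "is_hom E EG (\<lambda>i. if i \<in> V1 then g i else h i)"
    then have hom: "{if u \<in> V1 then g u else h u, if v \<in> V1 then g v else h v} \<in> EG"
      if "{u, v} \<in> E" for u v
      using that by (simp add: is_hom_def)
    show "is_hom {e \<in> E. e \<subseteq> V1} EG g \<and> is_hom {e \<in> E. e \<subseteq> V2} EG h"
      unfolding is_hom_def
    proof (intro conjI allI impI)
      fix u v assume "{u, v} \<in> {e \<in> E. e \<subseteq> V1}"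
      then show "{g u, g v} \<in> EG" using hom[of u v] by simp
    next
      fix u v assume "{u, v} \<in> {e \<in> E. e \<subseteq> V2}"
      moreover have "u \<notin> V1" "v \<notin> V1" using calculation assms(1) by auto
      ultimately show "{h u, h v} \<in> EG" using hom[of u v] by simp
    qed
  next
    assume homs: "is_hom {e \<in> E. e \<subseteq> V1} EG g \<and> is_hom {e \<in> E. e \<subseteq> V2} EG h"
    show "is_hom E EG (\<lambda>i. if i \<in> V1 then g i else h i)"
      unfolding is_hom_def
    proof (intro allI impI)
      fix u v assume uv: "{u, v} \<in> E"
      consider "{u, v} \<subseteq> V1" | "{u, v} \<subseteq> V2" "u \<notin> V1" "v \<notin> V1"
        using edges[OF uv] assms(1) by blast
      then show "{if u \<in> V1 then g u else h u, if v \<in> V1 then g v else h v} \<in> EG"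
        by cases (use homs uv in \<open>auto simp: is_hom_def\<close>)
    qed
  qed
  have "hom_count (V1 \<union> V2) E VG EG =
      (\<Sum>g\<in>V1 \<rightarrow>\<^sub>E VG. \<Sum>h\<in>V2 \<rightarrow>\<^sub>E VG. of_bool (is_hom E EG (\<lambda>i. if i \<in> V1 then g i else h i)))"
    using assms by (simp add: hom_count_eq_sum sum_PiE_Un)
  also have "\<dots> = (\<Sum>g\<in>V1 \<rightarrow>\<^sub>E VG. of_bool (is_hom {e \<in> E. e \<subseteq> V1} EG g)) *
      (\<Sum>h\<in>V2 \<rightarrow>\<^sub>E VG. of_bool (is_hom {e \<in> E. e \<subseteq> V2} EG h))"
    by (simp add: split of_bool_conj sum_product)
  finally show ?thesis using assms by (simp add: hom_count_eq_sum)
qed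

lemma hom_count_Union:
  assumes "finite P" and "pairwise disjnt P" and "\<And>C. C \<in> P \<Longrightarrow> finite C" and "finite VG"
    and "\<And>e. e \<in> E \<Longrightarrow> e \<noteq> {} \<and> (\<exists>C\<in>P. e \<subseteq> C)"
  shows "hom_count (\<Union>P) E VG EG = (\<Prod>C\<in>P. hom_count C {e \<in> E. e \<subseteq> C} VG EG)"
  using assms
proof (induction P arbitrary: E rule: finite_induct)
  case empty
  then have "E = {}" by (metis empty_iff equals0I)
  then show ?case by (simp add: hom_count_no_edges)
next
  case (insert C P)
  have "pairwise disjnt P" using insert.prems(1) by (simp add: pairwise_insert)
  have disj: "C \<inter> \<Union>P = {}"
    using insert.prems(1) insert.hyps(2) by (auto simp: pairwise_insert disjnt_def)
  have "hom_count (C \<union> \<Union>P) E VG EG =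
      hom_count C {e \<in> E. e \<subseteq> C} VG EG * hom_count (\<Union>P) {e \<in> E. e \<subseteq> \<Union>P} VG EG"
  proof (rule hom_count_Un)
    show "e \<subseteq> C \<or> e \<subseteq> \<Union>P" if e: "e \<in> E" for e
    proof -
      obtain C' where "C' \<in> insert C P" "e \<subseteq> C'" using insert.prems(4)[OF e] by blast
      then show ?thesis by auto
    qed
    show "finite C" using insert.prems(2)[of C] by simp
    show "finite (\<Union>P)" using insert.hyps(1)
    proof (rule finite_Union)
      show "finite M" if "M \<in> P" for M using insert.prems(2)[of M] that by simp
    qed
  qed (fact disj insert.prems(3))+
  also have "hom_count (\<Union>P) {e \<in> E. e \<subseteq> \<Union>P} VG EG =
      (\<Prod>C'\<in>P. hom_count C' {e \<in> {e \<in> E. e \<subseteq> \<Union>P}. e \<subseteq> C'} VG EG)"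
  proof (rule insert.IH)
    show "e \<noteq> {} \<and> (\<exists>C'\<in>P. e \<subseteq> C')" if e: "e \<in> {e \<in> E. e \<subseteq> \<Union>P}" for e
    proof -
      obtain C' where C': "C' \<in> insert C P" "e \<subseteq> C'" and "e \<noteq> {}"
        using insert.prems(4) e by blast
      then have "C' \<noteq> C" using e disj by blast
      then show ?thesis using C' \<open>e \<noteq> {}\<close> by blast
    qed
    show "finite C'" if "C' \<in> P" for C' using insert.prems(2)[of C'] that by simp
  qed (fact \<open>pairwise disjnt P\<close> insert.prems(3))+
  also have "(\<Prod>C'\<in>P. hom_count C' {e \<in> {e \<in> E. e \<subseteq> \<Union>P}. e \<subseteq> C'} VG EG) =
      (\<Prod>C'\<in>P. hom_count C' {e \<in> E. e \<subseteq> C'} VG EG)"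
  proof (rule prod.cong)
    fix C' assume "C' \<in> P"
    then have "{e \<in> {e \<in> E. e \<subseteq> \<Union>P}. e \<subseteq> C'} = {e \<in> E. e \<subseteq> C'}" by blast
    then show "hom_count C' {e \<in> {e \<in> E. e \<subseteq> \<Union>P}. e \<subseteq> C'} VG EG = hom_count C' {e \<in> E. e \<subseteq> C'} VG EG"
      by simp
  qed simp
  finally show ?case by (simp only: Union_insert prod.insert[OF insert.hyps])
qed

lemma components_partition:
  shows "\<Union>(components V E) = V" and "pairwise disjnt (components V E)"
proof -
  let ?R = "(adj E)\<^sup>*\<^sup>*"
  have sym: "?R v u" if "?R u v" for u v
    using symp_rtranclp[of "adj E"] that by (auto simp: symp_def adj_def insert_commute)
  have same: "{w \<in> V. ?R u w} = {w \<in> V. ?R v w}" if "?R u x" and "?R v x" for u v x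
  proof -
    have "?R u v" "?R v u"
      using rtranclp_trans[OF that(1) sym[OF that(2)]] rtranclp_trans[OF that(2) sym[OF that(1)]] .
    then show ?thesis using rtranclp_trans[of "adj E" u v] rtranclp_trans[of "adj E" v u] by blast
  qed
  show "\<Union>(components V E) = V" by (auto simp: components_def)
  show "pairwise disjnt (components V E)"
    unfolding pairwise_def disjnt_def components_def
  proof (clarify)
    fix u v assume "{w \<in> V. ?R u w} \<noteq> {w \<in> V. ?R v w}"
    then show "{w \<in> V. ?R u w} \<inter> {w \<in> V. ?R v w} = {}" using same by blast
  qed
qed

lemma edge_in_component:
  assumes "graph V E" and "e \<in> E"
  shows "\<exists>C\<in>components V E. e \<subseteq> C"
proof -
  obtain u v where "u \<in> V" "v \<in> V" "e = {u, v}" using assms by (auto simp: graph_def)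
  then have "e \<subseteq> {w \<in> V. (adj E)\<^sup>*\<^sup>* u w}" using assms(2) by (auto simp: adj_def)
  then show ?thesis using \<open>u \<in> V\<close> by (auto simp: components_def)
qed

lemma finite_components:
  assumes "finite V"
  shows "finite (components V E)" and "C \<in> components V E \<Longrightarrow> finite C"
proof -
  have "components V E \<subseteq> Pow V" using components_partition(1)[of V E] by blast
  then show "finite (components V E)" "C \<in> components V E \<Longrightarrow> finite C"
    using assms by (auto intro: finite_subset)
qed

lemma sum_card_components:
  assumes "finite V"
  shows "(\<Sum>C\<in>components V E. card C) = card V"
proof -
  have "card (\<Union>(components V E)) = (\<Sum>C\<in>components V E. card C)"
    by (rule card_Union_disjoint[OF components_partition(2) finite_components(2)[OF assms]])
  then show ?thesis by (simp add: components_partition(1))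
qed

lemma sum_card_edges_components:
  assumes "graph V E"
  shows "(\<Sum>C\<in>components V E. card {e \<in> E. e \<subseteq> C}) = card E"
proof -
  have "finite V" using assms by (simp add: graph_def)
  have nonempty: "e \<noteq> {}" if "e \<in> E" for e using assms that by (auto simp: graph_def)
  have "(\<Union>C\<in>components V E. {e \<in> E. e \<subseteq> C}) = E" using edge_in_component[OF assms] by blast
  moreover have "card (\<Union>C\<in>components V E. {e \<in> E. e \<subseteq> C}) = (\<Sum>C\<in>components V E. card {e \<in> E. e \<subseteq> C})"
  proof (rule card_UN_disjoint)
    show "finite (components V E)" "\<forall>C\<in>components V E. finite {e \<in> E. e \<subseteq> C}"
      using finite_components[OF \<open>finite V\<close>] by (auto intro: finite_subset[of _ "Pow _"])
    show "\<forall>C\<in>components V E. \<forall>C'\<in>components V E. C \<noteq> C' \<longrightarrow> {e \<in> E. e \<subseteq> C} \<inter> {e \<in> E. e \<subseteq> C'} = {}"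
    proof (intro ballI impI)
      fix C C' assume "C \<in> components V E" "C' \<in> components V E" "C \<noteq> C'"
      then have "C \<inter> C' = {}"
        using components_partition(2)[of V E] unfolding pairwise_def disjnt_def by blast
      then show "{e \<in> E. e \<subseteq> C} \<inter> {e \<in> E. e \<subseteq> C'} = {}" using nonempty by blast
    qed
  qed
  ultimately show ?thesis by simp
qed

lemma hom_count_components:
  assumes "graph V E" and "finite VG"
  shows "hom_count V E VG EG = (\<Prod>C\<in>components V E. hom_count C {e \<in> E. e \<subseteq> C} VG EG)"
proof -
  have "finite V" using assms(1) by (simp add: graph_def)
  have "e \<noteq> {} \<and> (\<exists>C\<in>components V E. e \<subseteq> C)" if "e \<in> E" for e
    using assms(1) that edge_in_component[OF assms(1) that] by (auto simp: graph_def)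
  from hom_count_Union[OF finite_components(1)[OF \<open>finite V\<close>] components_partition(2)
      finite_components(2)[OF \<open>finite V\<close>] assms(2) this]
  show ?thesis by (simp add: components_partition(1))
qed

lemma bipartition_swap:
  assumes "bipartition V E X Y"
  shows "bipartition V E Y X"
  unfolding bipartition_def
proof (intro conjI ballI)
  show "Y \<inter> X = {}" "Y \<union> X = V" using assms by (auto simp: bipartition_def)
  fix e assume "e \<in> E"
  then obtain a b where "a \<in> X" "b \<in> Y" "e = {a, b}" using assms by (auto simp: bipartition_def)
  moreover have "{a, b} = {b, a}" by (rule insert_commute)
  ultimately show "\<exists>a\<in>Y. \<exists>b\<in>X. e = {a, b}" by blast
qed

lemma bipartition_restrict:
  assumes "bipartition V E X Y" and "C \<subseteq> V"
  shows "bipartition C {e \<in> E. e \<subseteq> C} (X \<inter> C) (Y \<inter> C)"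
  unfolding bipartition_def
proof (intro conjI ballI)
  show "X \<inter> C \<inter> (Y \<inter> C) = {}" "X \<inter> C \<union> Y \<inter> C = C" using assms by (auto simp: bipartition_def)
  fix e assume e: "e \<in> {e \<in> E. e \<subseteq> C}"
  then obtain a b where "a \<in> X" "b \<in> Y" "e = {a, b}" using assms by (auto simp: bipartition_def)
  then show "\<exists>a\<in>X \<inter> C. \<exists>b\<in>Y \<inter> C. e = {a, b}" using e by auto
qed

lemma card_edges_bipartition:
  assumes "bipartition V E X Y" and "finite V"
  shows "card E = (\<Sum>a\<in>X. card {b \<in> Y. {a, b} \<in> E})"
proof -
  have XY: "X \<inter> Y = {}" "finite X" "finite Y" and edges: "\<And>e. e \<in> E \<Longrightarrow> \<exists>a\<in>X. \<exists>b\<in>Y. e = {a, b}"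
    using assms by (auto simp: bipartition_def)
  let ?pairs = "SIGMA a:X. {b \<in> Y. {a, b} \<in> E}"
  have inj: "inj_on (\<lambda>(a, b). {a, b}) ?pairs"
    using XY(1) by (auto simp: inj_on_def doubleton_eq_iff)
  have image: "(\<lambda>(a, b). {a, b}) ` ?pairs = E"
  proof
    show "E \<subseteq> (\<lambda>(a, b). {a, b}) ` ?pairs"
    proof
      fix e assume "e \<in> E"
      with edges obtain a b where "a \<in> X" "b \<in> Y" "e = {a, b}" by blast
      with \<open>e \<in> E\<close> have "(a, b) \<in> ?pairs" by simp
      then show "e \<in> (\<lambda>(a, b). {a, b}) ` ?pairs" using \<open>e = {a, b}\<close> by (auto intro: rev_image_eqI)
    qed
  qed auto
  have "card E = card ?pairs" using card_image[OF inj] image by simp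
  also have "\<dots> = (\<Sum>a\<in>X. card {b \<in> Y. {a, b} \<in> E})" using XY by (simp add: card_SigmaI)
  finally show ?thesis .
qed

lemma card_edges_bipartition_root:
  assumes "bipartition V E X Y" and "finite V" and "r \<in> X"
  shows "card E + card {y \<in> Y. {r, y} \<notin> E} = card Y + (\<Sum>u\<in>X - {r}. card {b \<in> Y. {u, b} \<in> E})"
proof -
  have "finite X" "finite Y" using assms(1,2) by (auto simp: bipartition_def)
  have "card Y = card ({y \<in> Y. {r, y} \<in> E} \<union> {y \<in> Y. {r, y} \<notin> E})"
    by (rule arg_cong[where f = card]) auto
  also have "\<dots> = card {y \<in> Y. {r, y} \<in> E} + card {y \<in> Y. {r, y} \<notin> E}"
    using \<open>finite Y\<close> by (intro card_Un_disjoint) auto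
  finally show ?thesis
    using card_edges_bipartition[OF assms(1,2)] \<open>finite X\<close> assms(3) by (simp add: sum.remove)
qed

text \<open>The hypotheses say that \<open>f\<close> is a homomorphism of the supergraph obtained by joining
  \<open>r\<close> to all of \<open>Y\<close>.\<close>
lemma is_hom_if_root_joined:
  assumes "bipartition V E X Y"
    and root: "\<forall>y\<in>Y. {f r, f y} \<in> EG" and rest: "\<forall>u\<in>X - {r}. \<forall>b\<in>Y. {u, b} \<in> E \<longrightarrow> {f u, f b} \<in> EG"
  shows "is_hom E EG f"
  unfolding is_hom_def
proof (intro allI impI)
  fix u v assume uv: "{u, v} \<in> E"
  then obtain a b where ab: "a \<in> X" "b \<in> Y" "{u, v} = {a, b}"
    using assms(1) by (force simp: bipartition_def)
  have "{f a, f b} \<in> EG"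
    using root rest ab uv by (cases "a = r") auto
  moreover have "{f u, f v} = {f a, f b}" using ab(3) by (auto simp: doubleton_eq_iff insert_commute)
  ultimately show "{f u, f v} \<in> EG" by simp
qed

section \<open>The host graph and random stars\<close>

locale host_graph =
  fixes VG :: "'a set" and EG :: "'a set set"
  assumes graph: "graph VG EG" and nonempty: "VG \<noteq> {}"
begin

definition A :: "'a \<Rightarrow> 'a \<Rightarrow> real" where "A x y = of_bool (adj EG x y)"
definition deg :: "'a \<Rightarrow> real" where "deg x = (\<Sum>y\<in>VG. A x y)"
definition vol :: real where "vol = (\<Sum>x\<in>VG. deg x)"
definition n :: real where "n = real (card VG)"
definition edge_density :: real where "edge_density = vol / n\<^sup>2"
definition codeg :: "'i set \<Rightarrow> ('i \<Rightarrow> 'a) \<Rightarrow> real" where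
  "codeg S y = (\<Sum>z\<in>VG. \<Prod>i\<in>S. A z (y i))"

lemma finite_VG: "finite VG"
  using graph by (simp add: graph_def)

lemma n_pos: "0 < n"
  using finite_VG nonempty by (simp add: n_def card_gt_0_iff)

lemma A_commute: "A x y = A y x"
  by (simp add: A_def adj_def insert_commute)

lemma A_nonneg: "0 \<le> A x y"
  by (simp add: A_def)

lemma A_vertices: "A x y \<noteq> 0 \<Longrightarrow> x \<in> VG \<and> y \<in> VG"
proof -
  assume "A x y \<noteq> 0"
  then have "{x, y} \<in> EG" by (simp add: A_def adj_def)
  then obtain u v where "u \<in> VG" "v \<in> VG" "{x, y} = {u, v}"
    using graph by (auto simp: graph_def)
  then show ?thesis by (auto simp: doubleton_eq_iff)
qed

lemma prod_A: "finite S \<Longrightarrow> (\<Prod>i\<in>S. A x (y i)) = of_bool (\<forall>i\<in>S. adj EG x (y i))"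
  by (simp add: A_def prod_of_bool)

lemma deg_nonneg: "0 \<le> deg x"
  by (simp add: deg_def sum_nonneg A_nonneg)

lemma deg_eq_0_imp: "deg x = 0 \<Longrightarrow> A x y = 0"
proof (cases "y \<in> VG")
  case True
  assume "deg x = 0"
  then show ?thesis
    using True finite_VG A_nonneg sum_nonneg_eq_0_iff[of VG "A x"] by (simp add: deg_def)
qed (use A_vertices in blast)

lemma vol_le: "vol \<le> n\<^sup>2"
proof -
  have "vol \<le> (\<Sum>x\<in>VG. \<Sum>y\<in>VG. 1)"
    unfolding vol_def deg_def by (intro sum_mono) (simp add: A_def)
  then show ?thesis by (simp add: n_def power2_eq_square)
qed

lemma edge_density_nonneg: "0 \<le> edge_density"
  by (simp add: edge_density_def vol_def sum_nonneg deg_nonneg)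

lemma edge_density_le_1: "edge_density \<le> 1"
  using vol_le n_pos by (simp add: edge_density_def)

lemma sum_prod_A: "finite S \<Longrightarrow> (\<Sum>y\<in>S \<rightarrow>\<^sub>E VG. \<Prod>i\<in>S. A x (y i)) = deg x ^ card S"
  using prod_sum_PiE[of S "\<lambda>_. VG" "\<lambda>_. A x"] finite_VG by (simp add: deg_def)

lemma codeg_ge_1:
  assumes "x \<in> VG" and "finite S" and "\<forall>i\<in>S. adj EG x (y i)"
  shows "1 \<le> codeg S y"
proof -
  have "(\<Prod>i\<in>S. A x (y i)) \<le> codeg S y"
    unfolding codeg_def using assms(1) finite_VG
    by (intro member_le_sum) (auto intro: prod_nonneg A_nonneg)
  then show ?thesis using assms(2,3) by (simp add: prod_A)
qed

text \<open>Integrating out the root \<open>r\<close> and the vertices of \<open>U\<close>, each of which ranges over the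
  common neighbours of the images of its neighbourhood \<open>N u \<subseteq> Y\<close>.\<close>
lemma sum_rooted_eq:
  assumes "finite Y" and "finite U" and "r \<notin> Y" and "r \<notin> U" and "Y \<inter> U = {}"
    and N: "\<And>u. u \<in> U \<Longrightarrow> N u \<subseteq> Y"
  shows "(\<Sum>f\<in>insert r (Y \<union> U) \<rightarrow>\<^sub>E VG. (\<Prod>y\<in>Y. A (f r) (f y)) * (\<Prod>u\<in>U. \<Prod>b\<in>N u. A (f u) (f b)))
       = (\<Sum>x\<in>VG. \<Sum>g\<in>Y \<rightarrow>\<^sub>E VG. (\<Prod>y\<in>Y. A x (g y)) * (\<Prod>u\<in>U. codeg (N u) g))"
proof -
  define F where "F g i z = (if i = r then \<Prod>y\<in>Y. A z (g y) else \<Prod>b\<in>N i. A z (g b))" for g i z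
  have "insert r (Y \<union> U) = Y \<union> insert r U" by auto
  then have "(\<Sum>f\<in>insert r (Y \<union> U) \<rightarrow>\<^sub>E VG. (\<Prod>y\<in>Y. A (f r) (f y)) * (\<Prod>u\<in>U. \<Prod>b\<in>N u. A (f u) (f b)))
      = (\<Sum>g\<in>Y \<rightarrow>\<^sub>E VG. \<Sum>h\<in>insert r U \<rightarrow>\<^sub>E VG. \<Prod>i\<in>insert r U. F g i (h i))"
  proof (simp only:, subst sum_PiE_Un)
    show "Y \<inter> insert r U = {}" using assms(3,5) by blast
  next
    show "(\<Sum>g\<in>Y \<rightarrow>\<^sub>E VG. \<Sum>h\<in>insert r U \<rightarrow>\<^sub>E VG.
        (\<Prod>y\<in>Y. A ((\<lambda>i. if i \<in> Y then g i else h i) r) ((\<lambda>i. if i \<in> Y then g i else h i) y)) *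
        (\<Prod>u\<in>U. \<Prod>b\<in>N u. A ((\<lambda>i. if i \<in> Y then g i else h i) u) ((\<lambda>i. if i \<in> Y then g i else h i) b)))
      = (\<Sum>g\<in>Y \<rightarrow>\<^sub>E VG. \<Sum>h\<in>insert r U \<rightarrow>\<^sub>E VG. \<Prod>i\<in>insert r U. F g i (h i))"
    proof (intro sum.cong refl)
      fix g h
      have "(\<Prod>u\<in>U. \<Prod>b\<in>N u. A (if u \<in> Y then g u else h u) (if b \<in> Y then g b else h b))
          = (\<Prod>u\<in>U. F g u (h u))"
      proof (rule prod.cong[OF refl])
        fix u assume "u \<in> U"
        then have "u \<notin> Y" "u \<noteq> r" "N u \<subseteq> Y" using assms(4,5) N by auto
        then show "(\<Prod>b\<in>N u. A (if u \<in> Y then g u else h u) (if b \<in> Y then g b else h b)) = F g u (h u)"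
          unfolding F_def by (auto intro!: prod.cong)
      qed
      moreover have "(\<Prod>y\<in>Y. A (if r \<in> Y then g r else h r) (if y \<in> Y then g y else h y)) = F g r (h r)"
        using assms(3) unfolding F_def by (auto intro: prod.cong)
      ultimately show "(\<Prod>y\<in>Y. A (if r \<in> Y then g r else h r) (if y \<in> Y then g y else h y)) *
          (\<Prod>u\<in>U. \<Prod>b\<in>N u. A (if u \<in> Y then g u else h u) (if b \<in> Y then g b else h b))
        = (\<Prod>i\<in>insert r U. F g i (h i))"
        using assms(2,4) by simp
    qed
  qed
  also have "\<dots> = (\<Sum>g\<in>Y \<rightarrow>\<^sub>E VG. \<Prod>i\<in>insert r U. \<Sum>z\<in>VG. F g i z)"
    using assms(2) finite_VG by (simp add: prod_sum_PiE)
  also have "\<dots> = (\<Sum>g\<in>Y \<rightarrow>\<^sub>E VG. (\<Sum>x\<in>VG. \<Prod>y\<in>Y. A x (g y)) * (\<Prod>u\<in>U. codeg (N u) g))"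
  proof (intro sum.cong refl)
    fix g
    have "(\<Prod>u\<in>U. \<Sum>z\<in>VG. F g u z) = (\<Prod>u\<in>U. codeg (N u) g)"
    proof (rule prod.cong[OF refl])
      fix u assume "u \<in> U"
      then have "u \<noteq> r" using assms(4) by auto
      then show "(\<Sum>z\<in>VG. F g u z) = codeg (N u) g" by (simp add: F_def codeg_def)
    qed
    then show "(\<Prod>i\<in>insert r U. \<Sum>z\<in>VG. F g i z) = (\<Sum>x\<in>VG. \<Prod>y\<in>Y. A x (g y)) * (\<Prod>u\<in>U. codeg (N u) g)"
      using assms(2,4) by (simp add: F_def)
  qed
  finally show ?thesis
    by (simp add: sum_distrib_right sum.swap[of _ "Y \<rightarrow>\<^sub>E VG"])
qed

lemma hom_density_K2: "hom_density K2_V K2_E VG EG = edge_density"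
proof -
  have is_hom_K2: "is_hom K2_E EG f \<longleftrightarrow> adj EG (f 0) (f 1)" for f :: "nat \<Rightarrow> 'a"
  proof
    assume "adj EG (f 0) (f 1)"
    then show "is_hom K2_E EG f"
      unfolding is_hom_def K2_E_def adj_def by (auto simp: doubleton_eq_iff insert_commute)
  qed (simp add: is_hom_def K2_E_def adj_def)
  have "real (hom_count K2_V K2_E VG EG) = (\<Sum>f\<in>{0::nat, 1} \<rightarrow>\<^sub>E VG. A (f 0) (f 1))"
    using finite_VG by (simp add: hom_count_eq_sum K2_V_def is_hom_K2 A_def)
  also have "\<dots> = (\<Sum>x\<in>VG. \<Sum>g\<in>{1::nat} \<rightarrow>\<^sub>E VG. A x (g 1))"
    using sum_rooted_eq[of "{1::nat}" "{}" 0 "\<lambda>_. {}"] by simp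
  also have "\<dots> = vol"
    using finite_VG by (simp add: sum_PiE_singleton vol_def deg_def)
  finally show ?thesis
    by (simp add: hom_density_def edge_density_def K2_V_def n_def power2_eq_square)
qed

end

locale host_graph_with_edges = host_graph +
  assumes edges_nonempty: "EG \<noteq> {}"
begin

definition stat :: "'a \<Rightarrow> real" where "stat x = deg x / vol"

text \<open>\<open>star_prob S x y\<close> is the probability that a vertex \<open>x\<close> drawn from the stationary
  distribution \<open>stat\<close>, together with independent uniformly random neighbours \<open>y i\<close> of \<open>x\<close>
  for \<open>i \<in> S\<close>, equals \<open>(x, y)\<close>; \<open>leaf_prob S\<close> is the law of the leaves \<open>y\<close>.\<close>
definition star_prob :: "'i set \<Rightarrow> 'a \<Rightarrow> ('i \<Rightarrow> 'a) \<Rightarrow> real" where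
  "star_prob S x y = stat x / deg x ^ card S * (\<Prod>i\<in>S. A x (y i))"

definition leaf_prob :: "'i set \<Rightarrow> ('i \<Rightarrow> 'a) \<Rightarrow> real" where
  "leaf_prob S y = (\<Sum>x\<in>VG. star_prob S x y)"

lemma vol_pos: "0 < vol"
proof -
  obtain u v where uv: "u \<in> VG" "v \<in> VG" "{u, v} \<in> EG"
    using edges_nonempty graph by (force simp: graph_def)
  then have "1 \<le> deg u"
    unfolding deg_def using finite_VG A_nonneg
    by (metis A_def adj_def of_bool_eq(2) member_le_sum)
  also have "deg u \<le> vol"
    unfolding vol_def using uv(1) finite_VG deg_nonneg by (metis member_le_sum)
  finally show ?thesis by simp
qed

lemma edge_density_pos: "0 < edge_density"
  using vol_pos n_pos by (simp add: edge_density_def)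

lemma stat_nonneg: "0 \<le> stat x"
  using vol_pos deg_nonneg by (simp add: stat_def)

lemma stat_eq_0: "\<not> 0 < deg x \<Longrightarrow> stat x = 0"
  using deg_nonneg[of x] by (simp add: stat_def)

lemma sum_stat: "(\<Sum>x\<in>VG. stat x) = 1"
  using vol_pos by (simp add: stat_def vol_def flip: sum_divide_distrib)

lemma star_prob_nonneg: "0 \<le> star_prob S x y"
  by (simp add: star_prob_def stat_nonneg deg_nonneg prod_nonneg A_nonneg)

lemma star_prob_pos_imp:
  assumes "0 < star_prob S x y" and "finite S"
  shows "0 < deg x" and "\<forall>i\<in>S. adj EG x (y i)"
proof -
  show "0 < deg x" using assms(1) stat_eq_0 by (force simp: star_prob_def)
  show "\<forall>i\<in>S. adj EG x (y i)"
  proof (rule ccontr)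
    assume "\<not> (\<forall>i\<in>S. adj EG x (y i))"
    then have "star_prob S x y = 0" using assms(2) by (simp add: star_prob_def prod_A)
    then show False using assms(1) by simp
  qed
qed

lemma sum_star_prob_restrict:
  assumes "finite S" and "T \<subseteq> S"
  shows "(\<Sum>y\<in>S \<rightarrow>\<^sub>E VG. star_prob S x y * h (restrict y T)) =
         (\<Sum>y\<in>T \<rightarrow>\<^sub>E VG. star_prob T x y * h y)"
proof (cases "0 < deg x")
  case True
  have card: "card S = card T + card (S - T)"
    using assms by (metis card_Diff_subset card_mono add_diff_inverse_nat not_less finite_subset)
  have "(\<Sum>y\<in>S \<rightarrow>\<^sub>E VG. star_prob S x y * h (restrict y T)) =
      stat x / deg x ^ card S * (\<Sum>y\<in>S \<rightarrow>\<^sub>E VG. (\<Prod>i\<in>S. A x (y i)) * h (restrict y T))"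
    by (simp add: star_prob_def sum_distrib_left mult.assoc)
  also have "\<dots> = stat x / deg x ^ card S *
      (deg x ^ card (S - T) * (\<Sum>y\<in>T \<rightarrow>\<^sub>E VG. (\<Prod>i\<in>T. A x (y i)) * h y))"
    using sum_PiE_prod_restrict[OF assms finite_VG, of "A x" h] by (simp add: deg_def)
  also have "\<dots> = stat x / deg x ^ card T * (\<Sum>y\<in>T \<rightarrow>\<^sub>E VG. (\<Prod>i\<in>T. A x (y i)) * h y)"
    using True by (simp add: card power_add)
  finally show ?thesis
    by (simp add: star_prob_def sum_distrib_left mult.assoc)
qed (simp add: star_prob_def stat_eq_0)

lemma sum_star_prob: "finite S \<Longrightarrow> (\<Sum>y\<in>S \<rightarrow>\<^sub>E VG. star_prob S x y) = stat x"
  using sum_star_prob_restrict[of S "{}" x "\<lambda>_. 1"] by (simp add: star_prob_def)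

lemma sum_sum_star_prob: "finite S \<Longrightarrow> (\<Sum>x\<in>VG. \<Sum>y\<in>S \<rightarrow>\<^sub>E VG. star_prob S x y) = 1"
  by (simp add: sum_star_prob sum_stat)

lemma stat_div_deg: "x \<in> VG \<Longrightarrow> stat x / deg x * A x z = A x z / vol"
  using deg_eq_0_imp[of x z] by (cases "deg x = 0") (auto simp: stat_def)

text \<open>Stationarity of \<open>stat\<close>: each single leaf is again distributed according to \<open>stat\<close>.\<close>
lemma sum_leaf_prob_component:
  assumes "finite S" and "i \<in> S"
  shows "(\<Sum>y\<in>S \<rightarrow>\<^sub>E VG. leaf_prob S y * h (y i)) = (\<Sum>z\<in>VG. stat z * h z)"
proof -
  have "(\<Sum>y\<in>S \<rightarrow>\<^sub>E VG. leaf_prob S y * h (y i)) = (\<Sum>x\<in>VG. \<Sum>y\<in>S \<rightarrow>\<^sub>E VG. star_prob S x y * h (y i))"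
    by (subst sum.swap) (simp add: leaf_prob_def sum_distrib_right)
  also have "\<dots> = (\<Sum>x\<in>VG. \<Sum>y\<in>{i} \<rightarrow>\<^sub>E VG. stat x / deg x * A x (y i) * h (y i))"
    using sum_star_prob_restrict[of S "{i}" _ "\<lambda>y. h (y i)"] assms by (simp add: star_prob_def)
  also have "\<dots> = (\<Sum>x\<in>VG. \<Sum>z\<in>VG. stat x / deg x * A x z * h z)"
    by (intro sum.cong refl) (rule sum_PiE_singleton[OF finite_VG])
  also have "\<dots> = (\<Sum>x\<in>VG. \<Sum>z\<in>VG. A x z / vol * h z)"
    by (intro sum.cong refl) (simp only: stat_div_deg)
  also have "\<dots> = (\<Sum>z\<in>VG. stat z * h z)"
    by (subst sum.swap) (simp add: stat_def deg_def A_commute sum_distrib_right flip: sum_divide_distrib)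
  finally show ?thesis .
qed

lemma stat_entropy: "(\<Sum>x\<in>VG. stat x * ln (stat x)) = (\<Sum>x\<in>VG. stat x * ln (deg x)) - ln vol"
proof -
  have "stat x * ln (stat x) = stat x * ln (deg x) - stat x * ln vol" for x
    using vol_pos stat_eq_0[of x] by (cases "0 < deg x") (auto simp: stat_def ln_div algebra_simps)
  then show ?thesis by (simp add: sum_subtractf sum_stat flip: sum_distrib_right)
qed

text \<open>Equivalently, the entropy of \<open>stat\<close> is at most \<open>ln n\<close>.\<close>
lemma ln_vol_le: "ln vol - ln n \<le> (\<Sum>x\<in>VG. stat x * ln (deg x))"
proof -
  have "(\<Sum>x\<in>VG. stat x * ln (1 / n)) \<le> (\<Sum>x\<in>VG. stat x * ln (stat x))"
    using n_pos finite_VG stat_nonneg by (intro gibbs_inequality) (simp_all add: sum_stat n_def)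
  then show ?thesis
    using n_pos by (simp add: stat_entropy ln_div sum_stat sum_negf flip: sum_distrib_right)
qed

lemma leaf_prob_nonneg: "0 \<le> leaf_prob S y"
  by (simp add: leaf_prob_def sum_nonneg star_prob_nonneg)

lemma sum_leaf_prob: "finite S \<Longrightarrow> (\<Sum>y\<in>S \<rightarrow>\<^sub>E VG. leaf_prob S y) = 1"
  unfolding leaf_prob_def by (subst sum.swap) (rule sum_sum_star_prob)

lemma star_prob_le_leaf_prob: "x \<in> VG \<Longrightarrow> star_prob S x y \<le> leaf_prob S y"
  unfolding leaf_prob_def using finite_VG star_prob_nonneg by (intro member_le_sum) auto

lemma star_prob_entropy:
  assumes "finite S"
  shows "(\<Sum>x\<in>VG. \<Sum>y\<in>S \<rightarrow>\<^sub>E VG. star_prob S x y * ln (star_prob S x y)) =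
    (\<Sum>x\<in>VG. stat x * ln (stat x)) - card S * (\<Sum>x\<in>VG. stat x * ln (deg x))"
proof -
  have "(\<Sum>y\<in>S \<rightarrow>\<^sub>E VG. star_prob S x y * ln (star_prob S x y)) =
      stat x * ln (stat x) - card S * (stat x * ln (deg x))" for x
  proof (cases "0 < deg x")
    case True
    then have stat_pos: "0 < stat x" using vol_pos by (simp add: stat_def)
    define c where "c = stat x / deg x ^ card S"
    have "star_prob S x y * ln (star_prob S x y) = (\<Prod>i\<in>S. A x (y i)) * (c * ln c)" for y
      using assms by (cases "\<forall>i\<in>S. adj EG x (y i)") (simp_all add: star_prob_def c_def prod_A)
    then have "(\<Sum>y\<in>S \<rightarrow>\<^sub>E VG. star_prob S x y * ln (star_prob S x y)) = deg x ^ card S * (c * ln c)"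
      using assms by (simp add: sum_prod_A flip: sum_distrib_right)
    also have "\<dots> = stat x * ln c" using True by (simp add: c_def)
    also have "ln c = ln (stat x) - card S * ln (deg x)"
      using True stat_pos by (simp add: c_def ln_div ln_realpow)
    finally show ?thesis by (simp add: algebra_simps)
  qed (simp add: star_prob_def stat_eq_0)
  then show ?thesis by (simp add: sum_subtractf sum_distrib_left)
qed

text \<open>Given the leaves \<open>y\<close>, the root is one of the \<open>codeg S y\<close> common neighbours, so the
  conditional entropy of the root is at most \<open>ln (codeg S y)\<close>.\<close>
lemma leaf_prob_entropy_le:
  assumes "finite S"
  shows "leaf_prob S y * ln (leaf_prob S y) \<le>
    (\<Sum>x\<in>VG. star_prob S x y * ln (star_prob S x y)) + leaf_prob S y * ln (codeg S y)"
proof -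
  define P where "P = leaf_prob S y"
  define q where "q x = P * (\<Prod>i\<in>S. A x (y i)) / codeg S y" for x
  have support: "(\<Prod>i\<in>S. A x (y i)) = 1 \<and> 0 < P \<and> 1 \<le> codeg S y"
    if "x \<in> VG" "0 < star_prob S x y" for x
  proof -
    have adj: "\<forall>i\<in>S. adj EG x (y i)" using star_prob_pos_imp(2)[OF that(2) assms] .
    moreover have "0 < P" using that star_prob_le_leaf_prob[of x S y] by (simp add: P_def)
    ultimately show ?thesis using codeg_ge_1[OF that(1) assms adj] assms by (simp add: prod_A)
  qed
  have codeg_nonneg: "0 \<le> codeg S y"
    by (simp add: codeg_def sum_nonneg prod_nonneg A_nonneg)
  have "(\<Sum>x\<in>VG. star_prob S x y * ln (q x)) \<le> (\<Sum>x\<in>VG. star_prob S x y * ln (star_prob S x y))"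
  proof (rule gibbs_inequality)
    show "0 < q x" if "x \<in> VG" "0 < star_prob S x y" for x
      using support[OF that] by (simp add: q_def)
    show "0 \<le> q x" for x
      unfolding q_def P_def
      by (intro divide_nonneg_nonneg mult_nonneg_nonneg prod_nonneg leaf_prob_nonneg codeg_nonneg A_nonneg)
    have "sum q VG = P * codeg S y / codeg S y"
      unfolding q_def codeg_def by (simp only: sum_divide_distrib[symmetric] sum_distrib_left[symmetric])
    also have "\<dots> \<le> P" using leaf_prob_nonneg[of S y] by (cases "codeg S y = 0") (simp_all add: P_def)
    finally show "sum q VG \<le> (\<Sum>x\<in>VG. star_prob S x y)" by (simp add: P_def leaf_prob_def)
  qed (simp_all add: finite_VG star_prob_nonneg)
  moreover have "star_prob S x y * ln (q x) = star_prob S x y * ln P - star_prob S x y * ln (codeg S y)"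
    if "x \<in> VG" for x
  proof (cases "0 < star_prob S x y")
    case True
    then show ?thesis using support[OF that True] by (simp add: q_def ln_div algebra_simps)
  next
    case False
    then show ?thesis using star_prob_nonneg[of S x y] by simp
  qed
  ultimately show ?thesis
    by (simp add: sum_subtractf P_def leaf_prob_def flip: sum_distrib_right)
qed

lemma stat_pos_if_leaf_prob_pos:
  assumes "0 < leaf_prob S y" and "finite S" and "i \<in> S"
  shows "0 < stat (y i)"
proof -
  have "\<exists>x\<in>VG. 0 < star_prob S x y"
  proof (rule ccontr)
    assume "\<not> (\<exists>x\<in>VG. 0 < star_prob S x y)"
    then have "leaf_prob S y \<le> 0"
      unfolding leaf_prob_def by (intro sum_nonpos) (simp add: not_less)
    then show False using assms(1) by simp
  qed
  then obtain x where x: "x \<in> VG" "0 < star_prob S x y" by blast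
  then have "A (y i) x = 1" using star_prob_pos_imp(2)[OF x(2) assms(2)] assms(3)
    by (simp add: A_def adj_def insert_commute)
  then have "1 \<le> deg (y i)"
    unfolding deg_def using x(1) finite_VG A_nonneg by (metis member_le_sum)
  then show ?thesis using vol_pos by (simp add: stat_def)
qed

text \<open>Each leaf is distributed according to \<open>stat\<close>, so by subadditivity of entropy the
  entropy of the leaves is at most \<open>card S\<close> times the entropy of \<open>stat\<close>.\<close>
lemma leaf_prob_entropy_ge:
  assumes "finite S"
  shows "card S * (\<Sum>x\<in>VG. stat x * ln (stat x)) \<le>
    (\<Sum>y\<in>S \<rightarrow>\<^sub>E VG. leaf_prob S y * ln (leaf_prob S y))"
proof -
  define R where "R y = (\<Prod>i\<in>S. stat (y i))" for y
  have "(\<Sum>y\<in>S \<rightarrow>\<^sub>E VG. leaf_prob S y * ln (R y)) \<le> (\<Sum>y\<in>S \<rightarrow>\<^sub>E VG. leaf_prob S y * ln (leaf_prob S y))"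
  proof (rule gibbs_inequality)
    show "0 < R y" if "0 < leaf_prob S y" for y
      unfolding R_def using stat_pos_if_leaf_prob_pos[OF that assms] by (simp add: prod_pos)
    have "sum R (S \<rightarrow>\<^sub>E VG) = (\<Prod>i\<in>S. \<Sum>x\<in>VG. stat x)"
      unfolding R_def using prod_sum_PiE[of S "\<lambda>_. VG" "\<lambda>_. stat"] assms finite_VG by simp
    then show "sum R (S \<rightarrow>\<^sub>E VG) \<le> sum (leaf_prob S) (S \<rightarrow>\<^sub>E VG)"
      using assms by (simp add: sum_stat sum_leaf_prob)
  qed (simp_all add: assms finite_VG finite_PiE leaf_prob_nonneg R_def prod_nonneg stat_nonneg)
  moreover have "leaf_prob S y * ln (R y) = (\<Sum>i\<in>S. leaf_prob S y * ln (stat (y i)))" for y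
  proof (cases "0 < leaf_prob S y")
    case True
    have "ln (R y) = (\<Sum>i\<in>S. ln (stat (y i)))"
      unfolding R_def
    proof (rule ln_prod[OF assms])
      fix i assume "i \<in> S"
      then show "stat (y i) \<noteq> 0" using stat_pos_if_leaf_prob_pos[OF True assms \<open>i \<in> S\<close>] by simp
    qed
    then show ?thesis by (simp add: sum_distrib_left)
  next
    case False
    then show ?thesis using leaf_prob_nonneg[of S y] by simp
  qed
  moreover have "(\<Sum>y\<in>S \<rightarrow>\<^sub>E VG. \<Sum>i\<in>S. leaf_prob S y * ln (stat (y i))) =
      card S * (\<Sum>x\<in>VG. stat x * ln (stat x))"
  proof -
    have "(\<Sum>y\<in>S \<rightarrow>\<^sub>E VG. \<Sum>i\<in>S. leaf_prob S y * ln (stat (y i))) =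
        (\<Sum>i\<in>S. \<Sum>x\<in>VG. stat x * ln (stat x))"
      by (subst sum.swap) (rule sum.cong[OF refl], rule sum_leaf_prob_component[OF assms])
    then show ?thesis by simp
  qed
  ultimately show ?thesis by simp
qed

text \<open>With \<open>x\<close> the root and \<open>y\<close> the leaves of the random star,
  \<open>E ln (codeg S y) \<ge> H(x | y) = H(x, y) - H(y) \<ge> (1 - card S) H(stat) + card S * E ln (deg x)\<close>,
  and \<open>H(stat) = ln vol - E ln (deg x) \<le> ln n\<close>.\<close>
lemma expected_ln_codeg:
  assumes "finite S"
  shows "ln n + card S * ln edge_density \<le>
    (\<Sum>x\<in>VG. \<Sum>y\<in>S \<rightarrow>\<^sub>E VG. star_prob S x y * ln (codeg S y))"
proof (cases "S = {}")
  case True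
  have "codeg S y = n" for y using True by (simp add: codeg_def n_def)
  then show ?thesis
    using sum_sum_star_prob[OF assms] True by (simp flip: sum_distrib_right)
next
  case False
  define k where "k = real (card S)"
  define L where "L = (\<Sum>x\<in>VG. stat x * ln (deg x))"
  define H where "H = (\<Sum>x\<in>VG. stat x * ln (stat x))"
  have k: "1 \<le> k" using False assms by (simp add: k_def Suc_le_eq card_gt_0_iff)
  have "(\<Sum>x\<in>VG. \<Sum>y\<in>S \<rightarrow>\<^sub>E VG. star_prob S x y * ln (codeg S y)) =
      (\<Sum>y\<in>S \<rightarrow>\<^sub>E VG. leaf_prob S y * ln (codeg S y))"
    unfolding leaf_prob_def by (simp add: sum_distrib_right sum.swap[of _ VG])
  also have "\<dots> \<ge> (\<Sum>y\<in>S \<rightarrow>\<^sub>E VG. leaf_prob S y * ln (leaf_prob S y)) -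
      (\<Sum>y\<in>S \<rightarrow>\<^sub>E VG. \<Sum>x\<in>VG. star_prob S x y * ln (star_prob S x y))"
    using leaf_prob_entropy_le[OF assms] by (simp add: sum_subtractf[symmetric] sum_mono algebra_simps)
  also have "(\<Sum>y\<in>S \<rightarrow>\<^sub>E VG. \<Sum>x\<in>VG. star_prob S x y * ln (star_prob S x y)) = H - k * L"
    using star_prob_entropy[OF assms] by (simp add: sum.swap[of _ "S \<rightarrow>\<^sub>E VG"] H_def k_def L_def)
  finally have "k * H - (H - k * L) \<le> (\<Sum>x\<in>VG. \<Sum>y\<in>S \<rightarrow>\<^sub>E VG. star_prob S x y * ln (codeg S y))"
    using leaf_prob_entropy_ge[OF assms] by (simp add: H_def k_def)
  moreover have H: "H = L - ln vol" by (simp add: H_def L_def stat_entropy)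
  then have "k * H - (H - k * L) = (2 * k - 1) * L - (k - 1) * ln vol"
    unfolding H by (simp add: algebra_simps)
  moreover have "(2 * k - 1) * (ln vol - ln n) \<le> (2 * k - 1) * L"
    using ln_vol_le k by (intro mult_left_mono) (auto simp: L_def)
  moreover have "(2 * k - 1) * (ln vol - ln n) - (k - 1) * ln vol = ln n + k * (ln vol - 2 * ln n)"
    by (simp add: algebra_simps)
  moreover have "ln edge_density = ln vol - 2 * ln n"
    using vol_pos n_pos by (simp add: edge_density_def ln_div ln_realpow)
  ultimately show ?thesis by (simp add: k_def)
qed

lemma expected_ln_codeg_subset:
  assumes "finite S" and "T \<subseteq> S"
  shows "ln n + card T * ln edge_density \<le>
    (\<Sum>x\<in>VG. \<Sum>y\<in>S \<rightarrow>\<^sub>E VG. star_prob S x y * ln (codeg T y))"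
proof -
  have "codeg T y = codeg T (restrict y T)" for y by (simp add: codeg_def)
  then have "(\<Sum>y\<in>S \<rightarrow>\<^sub>E VG. star_prob S x y * ln (codeg T y)) =
      (\<Sum>y\<in>T \<rightarrow>\<^sub>E VG. star_prob T x y * ln (codeg T y))" for x
    using sum_star_prob_restrict[OF assms, of x "\<lambda>y. ln (codeg T y)"] by simp
  then show ?thesis
    using expected_ln_codeg[of T] assms finite_subset by auto
qed

lemma star_prob_factor:
  assumes "finite Y" and "Y \<noteq> {}"
  shows "(\<Prod>y\<in>Y. A x (g y)) = star_prob Y x g * (vol * deg x ^ (card Y - 1))"
proof (cases "0 < deg x")
  case True
  have "deg x ^ card Y = deg x * deg x ^ (card Y - 1)"
    using assms by (simp flip: power_Suc add: card_gt_0_iff)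
  then show ?thesis using True vol_pos by (simp add: star_prob_def stat_def)
next
  case False
  then have "deg x = 0" using deg_nonneg[of x] by simp
  moreover obtain y where "y \<in> Y" using assms(2) by blast
  ultimately have "(\<Prod>y\<in>Y. A x (g y)) = 0" using assms(1) deg_eq_0_imp by (metis prod_zero_iff)
  then show ?thesis using False by (simp add: star_prob_def stat_eq_0)
qed

section \<open>Sidorenko's inequality for rooted bipartite graphs\<close>

lemma codeg_ge_1_if_star_prob_pos:
  assumes "x \<in> VG" and "0 < star_prob S x y" and "finite S" and "T \<subseteq> S"
  shows "1 \<le> codeg T y"
  using codeg_ge_1[OF assms(1), of T y] star_prob_pos_imp(2)[OF assms(2,3)] assms(3,4)
  by (auto intro: finite_subset)

lemma rooted_sum_eq_expectation:
  assumes "finite Y" and "Y \<noteq> {}" and "finite U" and "r \<notin> Y" and "r \<notin> U" and "Y \<inter> U = {}"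
    and "\<And>u. u \<in> U \<Longrightarrow> N u \<subseteq> Y"
  shows "(\<Sum>f\<in>insert r (Y \<union> U) \<rightarrow>\<^sub>E VG. (\<Prod>y\<in>Y. A (f r) (f y)) * (\<Prod>u\<in>U. \<Prod>b\<in>N u. A (f u) (f b)))
    = (\<Sum>x\<in>VG. \<Sum>g\<in>Y \<rightarrow>\<^sub>E VG.
        star_prob Y x g * (vol * deg x ^ (card Y - 1) * (\<Prod>u\<in>U. codeg (N u) g)))"
proof -
  have "(\<Sum>f\<in>insert r (Y \<union> U) \<rightarrow>\<^sub>E VG. (\<Prod>y\<in>Y. A (f r) (f y)) * (\<Prod>u\<in>U. \<Prod>b\<in>N u. A (f u) (f b)))
      = (\<Sum>x\<in>VG. \<Sum>g\<in>Y \<rightarrow>\<^sub>E VG. (\<Prod>y\<in>Y. A x (g y)) * (\<Prod>u\<in>U. codeg (N u) g))"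
    by (rule sum_rooted_eq[OF assms(1,3-7)])
  then show ?thesis unfolding star_prob_factor[OF assms(1,2)] by (simp add: mult_ac)
qed

lemma expected_ln_root_weight:
  assumes Y: "finite Y" "Y \<noteq> {}" and U: "finite U" and N: "\<And>u. u \<in> U \<Longrightarrow> N u \<subseteq> Y"
  shows "(\<Sum>x\<in>VG. \<Sum>g\<in>Y \<rightarrow>\<^sub>E VG.
      star_prob Y x g * ln (vol * deg x ^ (card Y - 1) * (\<Prod>u\<in>U. codeg (N u) g))) =
    ln vol + real (card Y - 1) * (\<Sum>x\<in>VG. stat x * ln (deg x)) +
    (\<Sum>u\<in>U. \<Sum>x\<in>VG. \<Sum>g\<in>Y \<rightarrow>\<^sub>E VG. star_prob Y x g * ln (codeg (N u) g))"
proof -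
  let ?m = "real (card Y - 1)"
  have pointwise: "star_prob Y x g * ln (vol * deg x ^ (card Y - 1) * (\<Prod>u\<in>U. codeg (N u) g)) =
      star_prob Y x g * ln vol + ?m * (star_prob Y x g * ln (deg x)) +
      (\<Sum>u\<in>U. star_prob Y x g * ln (codeg (N u) g))"
    if x: "x \<in> VG" for x g
  proof (cases "0 < star_prob Y x g")
    case True
    have "0 < codeg (N u) g" if "u \<in> U" for u
      using codeg_ge_1_if_star_prob_pos[OF x True Y(1) N[OF that]] by linarith
    then have codeg_pos: "\<forall>u\<in>U. 0 < codeg (N u) g" by blast
    then have "ln (\<Prod>u\<in>U. codeg (N u) g) = (\<Sum>u\<in>U. ln (codeg (N u) g))"
      using U by (intro ln_prod) auto
    moreover have "0 < (\<Prod>u\<in>U. codeg (N u) g)" using codeg_pos by (simp add: prod_pos)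
    ultimately show ?thesis using star_prob_pos_imp(1)[OF True Y(1)] vol_pos
      by (simp add: ln_mult ln_realpow sum_distrib_left algebra_simps)
  next
    case False
    then show ?thesis using star_prob_nonneg[of Y x g] by simp
  qed
  have "(\<Sum>x\<in>VG. \<Sum>g\<in>Y \<rightarrow>\<^sub>E VG. star_prob Y x g * ln vol) = ln vol"
    using sum_sum_star_prob[OF Y(1)] by (simp flip: sum_distrib_right)
  moreover have "(\<Sum>x\<in>VG. \<Sum>g\<in>Y \<rightarrow>\<^sub>E VG. ?m * (star_prob Y x g * ln (deg x))) =
      ?m * (\<Sum>x\<in>VG. stat x * ln (deg x))"
    by (simp add: sum_star_prob[OF Y(1)] flip: sum_distrib_left sum_distrib_right)
  moreover have "(\<Sum>x\<in>VG. \<Sum>g\<in>Y \<rightarrow>\<^sub>E VG. \<Sum>u\<in>U. star_prob Y x g * ln (codeg (N u) g)) =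
      (\<Sum>u\<in>U. \<Sum>x\<in>VG. \<Sum>g\<in>Y \<rightarrow>\<^sub>E VG. star_prob Y x g * ln (codeg (N u) g))"
    by (subst sum.swap) (rule sum.cong[OF refl], rule sum.swap)
  ultimately show ?thesis using pointwise by (simp add: sum.distrib)
qed

lemma expected_ln_root_weight_ge:
  assumes Y: "finite Y" "Y \<noteq> {}" and U: "finite U" and N: "\<And>u. u \<in> U \<Longrightarrow> N u \<subseteq> Y"
  shows "ln (n ^ (1 + card Y + card U) * edge_density ^ (card Y + (\<Sum>u\<in>U. card (N u)))) \<le>
    (\<Sum>x\<in>VG. \<Sum>g\<in>Y \<rightarrow>\<^sub>E VG.
      star_prob Y x g * ln (vol * deg x ^ (card Y - 1) * (\<Prod>u\<in>U. codeg (N u) g)))"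
proof -
  let ?codeg_terms = "\<Sum>u\<in>U. \<Sum>x\<in>VG. \<Sum>g\<in>Y \<rightarrow>\<^sub>E VG. star_prob Y x g * ln (codeg (N u) g)"
  have "card U * ln n + (\<Sum>u\<in>U. card (N u)) * ln edge_density \<le> ?codeg_terms"
  proof -
    have "(\<Sum>u\<in>U. ln n + card (N u) * ln edge_density) \<le> ?codeg_terms"
      using expected_ln_codeg_subset[OF Y(1) N] by (intro sum_mono) auto
    then show ?thesis by (simp add: sum.distrib sum_distrib_right)
  qed
  moreover have "real (card Y - 1) * (ln vol - ln n) \<le> real (card Y - 1) * (\<Sum>x\<in>VG. stat x * ln (deg x))"
    using ln_vol_le by (intro mult_left_mono) auto
  moreover have ln_density: "ln edge_density = ln vol - 2 * ln n"
    using vol_pos n_pos by (simp add: edge_density_def ln_div ln_realpow)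
  moreover have "1 \<le> card Y" using Y by (simp add: Suc_le_eq card_gt_0_iff)
  ultimately have "(1 + card Y + card U) * ln n + (card Y + (\<Sum>u\<in>U. card (N u))) * ln edge_density \<le>
      ln vol + real (card Y - 1) * (\<Sum>x\<in>VG. stat x * ln (deg x)) + ?codeg_terms"
    by (simp add: ln_density of_nat_diff algebra_simps)
  also have "\<dots> = (\<Sum>x\<in>VG. \<Sum>g\<in>Y \<rightarrow>\<^sub>E VG.
      star_prob Y x g * ln (vol * deg x ^ (card Y - 1) * (\<Prod>u\<in>U. codeg (N u) g)))"
    by (rule expected_ln_root_weight[symmetric, OF Y U N])
  finally show ?thesis using n_pos edge_density_pos by (simp add: ln_mult ln_realpow distrib_right)
qed

text \<open>Sidorenko's inequality for graphs with a vertex \<open>r\<close> adjacent to all of one side \<open>Y\<close>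
  (Conlon, Fox and Sudakov): the count is an expectation over the random star on \<open>Y\<close>, and
  weighted AM-GM reduces it to the logarithmic estimate above.\<close>
lemma rooted_sum_ge:
  assumes Y: "finite Y" "Y \<noteq> {}" and U: "finite U" and r: "r \<notin> Y" "r \<notin> U"
    and YU: "Y \<inter> U = {}" and N: "\<And>u. u \<in> U \<Longrightarrow> N u \<subseteq> Y"
  shows "n ^ (1 + card Y + card U) * edge_density ^ (card Y + (\<Sum>u\<in>U. card (N u)))
    \<le> (\<Sum>f\<in>insert r (Y \<union> U) \<rightarrow>\<^sub>E VG. (\<Prod>y\<in>Y. A (f r) (f y)) * (\<Prod>u\<in>U. \<Prod>b\<in>N u. A (f u) (f b)))"
    (is "?target \<le> _")
proof -
  define B where "B p = vol * deg (fst p) ^ (card Y - 1) * (\<Prod>u\<in>U. codeg (N u) (snd p))" for p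
  have pairs: "(\<Sum>x\<in>VG. \<Sum>g\<in>Y \<rightarrow>\<^sub>E VG. F x g) = (\<Sum>p\<in>VG \<times> (Y \<rightarrow>\<^sub>E VG). F (fst p) (snd p))"
    for F :: "_ \<Rightarrow> _ \<Rightarrow> real"
    by (simp add: sum.cartesian_product split_def)
  have "exp (ln ?target) \<le> exp (\<Sum>p\<in>VG \<times> (Y \<rightarrow>\<^sub>E VG). star_prob Y (fst p) (snd p) * ln (B p))"
    using expected_ln_root_weight_ge[OF Y U N] by (simp add: pairs B_def)
  also have "\<dots> \<le> (\<Sum>p\<in>VG \<times> (Y \<rightarrow>\<^sub>E VG). star_prob Y (fst p) (snd p) * B p)"
  proof (rule weighted_am_gm)
    show "finite (VG \<times> (Y \<rightarrow>\<^sub>E VG))" using Y(1) finite_VG by (simp add: finite_PiE)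
    show "(\<Sum>p\<in>VG \<times> (Y \<rightarrow>\<^sub>E VG). star_prob Y (fst p) (snd p)) = 1"
      using sum_sum_star_prob[OF Y(1)] by (simp add: pairs)
    show "0 < B p" if p: "p \<in> VG \<times> (Y \<rightarrow>\<^sub>E VG)" "0 < star_prob Y (fst p) (snd p)" for p
    proof -
      have "0 < codeg (N u) (snd p)" if "u \<in> U" for u
        using codeg_ge_1_if_star_prob_pos[OF _ p(2) Y(1) N[OF that]] p(1) by fastforce
      then show ?thesis
        using star_prob_pos_imp(1)[OF p(2) Y(1)] vol_pos by (simp add: B_def prod_pos)
    qed
  qed (simp add: star_prob_nonneg)
  also have "\<dots> = (\<Sum>f\<in>insert r (Y \<union> U) \<rightarrow>\<^sub>E VG.
      (\<Prod>y\<in>Y. A (f r) (f y)) * (\<Prod>u\<in>U. \<Prod>b\<in>N u. A (f u) (f b)))"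
    using rooted_sum_eq_expectation[where N = N, OF Y U r YU N] by (simp add: pairs B_def)
  finally show ?thesis using n_pos edge_density_pos by simp
qed

lemma rooted_hom_count_ge:
  assumes "finite C" and bip: "bipartition C EC X Y" and "r \<in> X" and "Y \<noteq> {}"
  shows "n ^ card C * edge_density ^ (card EC + card {y \<in> Y. {r, y} \<notin> EC})
    \<le> real (hom_count C EC VG EG)"
proof -
  define U where "U = X - {r}"
  define N where "N u = {b \<in> Y. {u, b} \<in> EC}" for u
  define rooted where "rooted f \<longleftrightarrow> (\<forall>y\<in>Y. adj EG (f r) (f y)) \<and> (\<forall>u\<in>U. \<forall>b\<in>N u. adj EG (f u) (f b))"
    for f :: "'b \<Rightarrow> 'a"
  have XY: "X \<inter> Y = {}" "X \<union> Y = C" using bip by (auto simp: bipartition_def)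
  have fin: "finite Y" "finite U" "finite (N u)" for u using assms(1) XY by (auto simp: U_def N_def)
  have r: "r \<notin> Y" "r \<notin> U" and YU: "Y \<inter> U = {}" and N: "\<And>u. u \<in> U \<Longrightarrow> N u \<subseteq> Y"
    using assms(3) XY by (auto simp: U_def N_def)
  have C: "C = insert r (Y \<union> U)" using XY assms(3) by (auto simp: U_def)
  have "(\<Prod>y\<in>Y. A (f r) (f y)) * (\<Prod>u\<in>U. \<Prod>b\<in>N u. A (f u) (f b)) = of_bool (rooted f)" for f
    using fin by (simp add: rooted_def prod_A prod_of_bool of_bool_conj)
  moreover have "{f \<in> C \<rightarrow>\<^sub>E VG. rooted f} = (C \<rightarrow>\<^sub>E VG) \<inter> {f. rooted f}" by blast
  ultimately have count: "real (card {f \<in> C \<rightarrow>\<^sub>E VG. rooted f}) =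
      (\<Sum>f\<in>insert r (Y \<union> U) \<rightarrow>\<^sub>E VG. (\<Prod>y\<in>Y. A (f r) (f y)) * (\<Prod>u\<in>U. \<Prod>b\<in>N u. A (f u) (f b)))"
    using assms(1) finite_VG C by (simp add: finite_PiE)
  have "card {f \<in> C \<rightarrow>\<^sub>E VG. rooted f} \<le> hom_count C EC VG EG"
    unfolding hom_count_is_hom
  proof (rule card_mono)
    show "finite {f \<in> C \<rightarrow>\<^sub>E VG. is_hom EC EG f}" using assms(1) finite_VG by (simp add: finite_PiE)
    show "{f \<in> C \<rightarrow>\<^sub>E VG. rooted f} \<subseteq> {f \<in> C \<rightarrow>\<^sub>E VG. is_hom EC EG f}"
    proof (intro subsetI)
      fix f assume "f \<in> {f \<in> C \<rightarrow>\<^sub>E VG. rooted f}"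
      then show "f \<in> {f \<in> C \<rightarrow>\<^sub>E VG. is_hom EC EG f}"
        using is_hom_if_root_joined[OF bip, where r = r and f = f] by (auto simp: rooted_def U_def N_def adj_def)
    qed
  qed
  moreover have "card C = 1 + card Y + card U" using C fin r YU by (simp add: card_Un_disjoint)
  ultimately show ?thesis
    using rooted_sum_ge[where N = N, OF fin(1) assms(4) fin(2) r YU N] count
      card_edges_bipartition_root[OF bip assms(1,3)]
    by (simp add: U_def N_def)
qed

end

section \<open>The width bound\<close>

context host_graph
begin

lemma edge_density_eq_0:
  assumes "EG = {}"
  shows "edge_density = 0"
proof -
  have "A x y = 0" for x y unfolding A_def adj_def using assms by simp
  then show ?thesis by (simp add: edge_density_def vol_def deg_def)
qed

lemma conn_width_witness:
  assumes "finite C" and "bipartition C EC X Y" and "EC \<noteq> {}"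
  obtains X' Y' r where "bipartition C EC X' Y'" "r \<in> X'" "Y' \<noteq> {}"
    "conn_width C EC = card {y \<in> Y'. {r, y} \<notin> EC}"
proof -
  define V1 where "V1 = fst (SOME p. bipartition C EC (fst p) (snd p))"
  define V2 where "V2 = snd (SOME p. bipartition C EC (fst p) (snd p))"
  have bip: "bipartition C EC V1 V2"
    using someI[of "\<lambda>p. bipartition C EC (fst p) (snd p)" "(X, Y)"] assms(2) by (simp add: V1_def V2_def)
  have "V1 \<noteq> {}" "V2 \<noteq> {}" "finite V1" "finite V2"
    using bip assms(1,3) by (auto simp: bipartition_def)
  let ?W = "(\<lambda>v. card {u \<in> V2. {v, u} \<notin> EC}) ` V1 \<union> (\<lambda>v. card {u \<in> V1. {v, u} \<notin> EC}) ` V2"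
  have "conn_width C EC = Min ?W"
    by (simp add: conn_width_def Let_def V1_def V2_def)
  moreover have "Min ?W \<in> ?W" using \<open>V1 \<noteq> {}\<close> \<open>finite V1\<close> \<open>finite V2\<close> by (intro Min_in) auto
  ultimately consider r where "r \<in> V1" "conn_width C EC = card {u \<in> V2. {r, u} \<notin> EC}"
    | r where "r \<in> V2" "conn_width C EC = card {u \<in> V1. {r, u} \<notin> EC}"
    by auto
  then show thesis
    using that bip bipartition_swap[OF bip] \<open>V1 \<noteq> {}\<close> \<open>V2 \<noteq> {}\<close> by cases blast+
qed

lemma component_hom_count_ge:
  assumes "finite C" and "bipartition C EC X Y"
  shows "n ^ card C * edge_density ^ (card EC + conn_width C EC) \<le> real (hom_count C EC VG EG)"
proof (cases "EC = {}")
  case True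
  have "n ^ card C * edge_density ^ (card EC + conn_width C EC) \<le> n ^ card C"
    using n_pos edge_density_nonneg edge_density_le_1 by (simp add: power_le_one mult_left_le)
  then show ?thesis using True assms(1) by (simp add: hom_count_no_edges n_def)
next
  case False
  obtain X' Y' r where bip: "bipartition C EC X' Y'" "r \<in> X'" "Y' \<noteq> {}"
    and width: "conn_width C EC = card {y \<in> Y'. {r, y} \<notin> EC}"
    using conn_width_witness[OF assms False] .
  show ?thesis
  proof (cases "EG = {}")
    case True
    have "finite EC"
      using bip(1) assms(1) by (intro finite_subset[of EC "Pow C"]) (auto simp: bipartition_def)
    then have "0 < card EC + conn_width C EC" using \<open>EC \<noteq> {}\<close> by (simp add: card_gt_0_iff)
    then have vanish: "edge_density ^ (card EC + conn_width C EC) = 0"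
      unfolding edge_density_eq_0[OF True] by (rule zero_power)
    show ?thesis unfolding vanish by simp
  next
    case False
    interpret host_graph_with_edges VG EG by unfold_locales fact
    show ?thesis using rooted_hom_count_ge[OF assms(1) bip] width by simp
  qed
qed

lemma hom_count_ge_width:
  assumes "graph VH EH" and "bipartite VH EH"
  shows "n ^ card VH * edge_density ^ (card EH + width VH EH) \<le> real (hom_count VH EH VG EG)"
proof -
  define P where "P = components VH EH"
  define E where "E C = {e \<in> EH. e \<subseteq> C}" for C
  have "finite VH" using assms(1) by (simp add: graph_def)
  obtain X Y where bip: "bipartition VH EH X Y" using assms(2) by (auto simp: bipartite_def)
  have "(\<Prod>C\<in>P. n ^ card C * edge_density ^ (card (E C) + conn_width C (E C))) =
      n ^ (\<Sum>C\<in>P. card C) * edge_density ^ (\<Sum>C\<in>P. card (E C) + conn_width C (E C))"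
    by (simp add: prod.distrib power_sum)
  also have "(\<Sum>C\<in>P. card C) = card VH"
    using sum_card_components[OF \<open>finite VH\<close>] by (simp add: P_def)
  also have "(\<Sum>C\<in>P. card (E C) + conn_width C (E C)) = card EH + width VH EH"
    using sum_card_edges_components[OF assms(1)] by (simp add: sum.distrib width_def P_def E_def)
  finally have "n ^ card VH * edge_density ^ (card EH + width VH EH) =
      (\<Prod>C\<in>P. n ^ card C * edge_density ^ (card (E C) + conn_width C (E C)))" ..
  also have "\<dots> \<le> (\<Prod>C\<in>P. real (hom_count C (E C) VG EG))"
  proof (rule prod_mono)
    fix C assume C: "C \<in> P"
    then have "C \<subseteq> VH" using components_partition(1)[of VH EH] by (auto simp: P_def)
    then show "0 \<le> n ^ card C * edge_density ^ (card (E C) + conn_width C (E C)) \<and>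
        n ^ card C * edge_density ^ (card (E C) + conn_width C (E C)) \<le> real (hom_count C (E C) VG EG)"
      using component_hom_count_ge[OF finite_components(2)[OF \<open>finite VH\<close> C[unfolded P_def]]
          bipartition_restrict[OF bip]] n_pos edge_density_nonneg
      by (simp add: E_def)
  qed
  also have "\<dots> = real (hom_count VH EH VG EG)"
    by (simp add: hom_count_components[OF assms(1) finite_VG] P_def E_def)
  finally show ?thesis .
qed

end

theorem corollary1p5:
  fixes VH :: "'a set" and EH :: "'a set set" and VG :: "'b set" and EG :: "'b set set"
  assumes "graph VH EH" and "bipartite VH EH"
    and "graph VG EG" and "VG \<noteq> {}"
  shows "hom_density VH EH VG EG \<ge> hom_density K2_V K2_E VG EG ^ (card EH + width VH EH)"
proof -
  interpret host_graph VG EG using assms(3,4) by unfold_locales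
  have "n ^ card VH * edge_density ^ (card EH + width VH EH) \<le> real (hom_count VH EH VG EG)"
    using hom_count_ge_width[OF assms(1,2)] .
  then show ?thesis
    unfolding hom_density_K2 using n_pos by (simp add: hom_density_def n_def pos_le_divide_eq mult.commute)
qed

end
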